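(* Let $\sigma=\langle\mathcal V,\mathcal C,S,B\rangle$ be an approval-based multi-winner election, and fix any run of ODH on $\sigma$, with arbitrary choices of the functions $F$ and arbitrary tie-breaking. For $i=0,\dots,S-1$, let $\mathcal C_e^i$ be the set of the first $i$ candidates chosen in this run, with $\mathcal C_e^0=\emptyset$. Then for every $c\in\mathcal C\setminus\mathcal C_e^i$ and every $F\in\mathfrak F^{\mathrm{opt}}_{\sigma,\mathcal C_e^i\cup\{c\}}$, $$\mathrm{Supp}_F(c)=\mathrm{maxMin}(\sigma,\mathcal C_e^i\cup\{c\}).$$ In particular, the value $s_c$ computed by ODH at each iteration does not depend on the choice of $F$.
   Context: An approval-based multi-winner election is a tuple $\sigma=\langle \mathcal V,\mathcal C,S,B\rangle$, where $\mathcal V$ is a finite set of agents, $\mathcal C$ is a finite set of candidates, $1\le S\le|\mathcal C|$ is an integer, and $B:2^{\mathcal C}\to\mathbb N$ gives, for each $\mathcal A\subseteq\mathcal C$, the number $B(\mathcal A)$ of agents whose ballot is exactly $\mathcal A$ (with $\sum_{\mathcal A}B(\mathcal A)\le|\mathcal V|$). For a non-empty $\mathcal A\subseteq\mathcal C$, the family $\mathfrak F_{\sigma,\mathcal A}$ is the set of all $F:2^{\mathcal C}\times\mathcal A\to\mathbb R$ such that: - $F(y,c)\ge0$ for all $y$ and $c$; - $F(y,c)=0$ if $c\notin y$; - $\sum_{c\in\mathcal A\cap y}F(y,c)=B(y)$ whenever $y\cap\mathcal A\neq\emptyset$. We write $\mathrm{Supp}_F(c)=\sum_yF(y,c)$ and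 $\mathrm{maxMin}(\sigma,\mathcal A)=\sup_{F\in\mathfrak F_{\sigma,\mathcal A}}\min_{c\in\mathcal A}\mathrm{Supp}_F(c)$. We also write $\mathfrak F^{\mathrm{opt}}_{\sigma,\mathcal A}=\{F\in\mathfrak F_{\sigma,\mathcal A}:\mathrm{Supp}_F(c)\ge\mathrm{maxMin}(\sigma,\mathcal A)\ \forall c\in\mathcal A\}$, which is non-empty. The Open D'Hondt (ODH) rule proceeds as follows. Start with $\mathcal C_e=\emptyset$ and repeat $S$ times: - for each $c\in\mathcal C\setminus\mathcal C_e$, choose any $F\in\mathfrak F^{\mathrm{opt}}_{\sigma,\mathcal C_e\cup\{c\}}$ and set $s_c=\mathrm{Supp}_F(c)$; - then add to $\mathcal C_e$ some $w\in\mathcal C\setminus\mathcal C_e$ with $s_w=\max_{c\in\mathcal C\setminus\mathcal C_e}s_c$ (ties broken arbitrarily). Finally, output $\mathcal C_e$. *)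

theory Defs
  imports Complex_Main
begin

text \<open>Approval-based multi-winner election (V, C, S, B). Ballots are subsets of C;
  B y is the number of agents whose ballot is exactly y. B is required to vanish
  outside 2^C.\<close>
definition election :: "'v set \<Rightarrow> 'c set \<Rightarrow> nat \<Rightarrow> ('c set \<Rightarrow> nat) \<Rightarrow> bool" where
  "election V C S B \<longleftrightarrow> finite V \<and> finite C \<and> 1 \<le> S \<and> S \<le> card C
     \<and> (\<forall>y. \<not> y \<subseteq> C \<longrightarrow> B y = 0)
     \<and> (\<Sum>y\<in>Pow C. B y) \<le> card V"

text \<open>The family of admissible support distributions F : 2^C \<times> A \<rightarrow> R.
  Only the values on Pow C \<times> A are meaningful.\<close>
definition fam :: "'c set \<Rightarrow> ('c set \<Rightarrow> nat) \<Rightarrow> 'c set \<Rightarrow> ('c set \<Rightarrow> 'c \<Rightarrow> real) set" where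
  "fam C B A = {F. (\<forall>y\<in>Pow C. \<forall>c\<in>A. F y c \<ge> 0)
                 \<and> (\<forall>y\<in>Pow C. \<forall>c\<in>A. c \<notin> y \<longrightarrow> F y c = 0)
                 \<and> (\<forall>y\<in>Pow C. y \<inter> A \<noteq> {} \<longrightarrow> (\<Sum>c\<in>A \<inter> y. F y c) = real (B y))}"

definition Supp :: "'c set \<Rightarrow> ('c set \<Rightarrow> 'c \<Rightarrow> real) \<Rightarrow> 'c \<Rightarrow> real" where
  "Supp C F c = (\<Sum>y\<in>Pow C. F y c)"

definition maxMin :: "'c set \<Rightarrow> ('c set \<Rightarrow> nat) \<Rightarrow> 'c set \<Rightarrow> real" where
  "maxMin C B A = (SUP F\<in>fam C B A. Min (Supp C F ` A))"

definition fam_opt :: "'c set \<Rightarrow> ('c set \<Rightarrow> nat) \<Rightarrow> 'c set \<Rightarrow> ('c set \<Rightarrow> 'c \<Rightarrow> real) set" where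
  "fam_opt C B A = {F\<in>fam C B A. \<forall>c\<in>A. Supp C F c \<ge> maxMin C B A}"

text \<open>A run of ODH: the list ws of the S candidates in the order they were elected.\<close>
definition odh_run :: "'c set \<Rightarrow> nat \<Rightarrow> ('c set \<Rightarrow> nat) \<Rightarrow> 'c list \<Rightarrow> bool" where
  "odh_run C S B ws \<longleftrightarrow> length ws = S \<and> distinct ws \<and> set ws \<subseteq> C \<and>
     (\<forall>i<S. \<exists>Fs :: 'c \<Rightarrow> ('c set \<Rightarrow> 'c \<Rightarrow> real).
        (\<forall>c\<in>C - set (take i ws). Fs c \<in> fam_opt C B (set (take i ws) \<union> {c}))
        \<and> (\<forall>c\<in>C - set (take i ws). Supp C (Fs c) c \<le> Supp C (Fs (ws ! i)) (ws ! i)))"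

end

theory Submission
  imports Defs
begin

text \<open>Call Z \<subseteq> A tight at level m if the ballots approving some member of Z carry at most
  m |Z| votes. Any F \<in> fam C B A gives Z at most that many votes, so if F gives every member
  of a tight Z at least m, it gives each exactly m. An optimal F always has a tight set at
  level maxMin: otherwise support can be pushed, along chains of ballots approving two
  candidates, from the candidates above the minimum to all those at the minimum, raising
  the minimum. So it suffices to find a tight set containing c, by induction on the step i.
  A tight set Y for E_i \<union> {c} missing c has a last elected member w, elected at step j < i;
  Y lies in E_j \<union> {w}, so s_w = maxMin(E_j \<union> {w}) is at most the level of Y, and since
  s_c \<le> s_w at step j, the tight set for c at step j serves at step i.\<close>

definition covered_votes :: "'c set \<Rightarrow> ('c set \<Rightarrow> nat) \<Rightarrow> 'c set \<Rightarrow> real" where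
  "covered_votes C B Z = (\<Sum>y\<in>{y\<in>Pow C. y \<inter> Z \<noteq> {}}. real (B y))"

definition tight :: "'c set \<Rightarrow> ('c set \<Rightarrow> nat) \<Rightarrow> real \<Rightarrow> 'c set \<Rightarrow> bool" where
  "tight C B m Z \<longleftrightarrow> covered_votes C B Z \<le> m * card Z"

text \<open>Support given to d by a ballot that also approves x may be moved from d to x.\<close>
definition support_edges :: "'c set \<Rightarrow> 'c set \<Rightarrow> ('c set \<Rightarrow> 'c \<Rightarrow> real) \<Rightarrow> ('c \<times> 'c) set" where
  "support_edges C A F = {(d, x). d \<in> A \<and> x \<in> A \<and> (\<exists>y\<in>Pow C. 0 < F y d \<and> x \<in> y)}"

definition support_shift ::
    "'c set \<Rightarrow> 'c set \<Rightarrow> ('c set \<Rightarrow> 'c \<Rightarrow> real) \<Rightarrow> ('c set \<Rightarrow> 'c \<Rightarrow> real) \<Rightarrow> bool" where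
  "support_shift C A F D \<longleftrightarrow>
     (\<forall>y\<in>Pow C. (\<Sum>x\<in>A \<inter> y. D y x) = 0) \<and> (\<forall>y\<in>Pow C. \<forall>x\<in>A. x \<notin> y \<longrightarrow> D y x = 0) \<and>
     (\<forall>y\<in>Pow C. \<forall>x\<in>A. D y x < 0 \<longrightarrow> 0 < F y x)"

lemma fam_nonneg: "F \<in> fam C B A \<Longrightarrow> y \<in> Pow C \<Longrightarrow> x \<in> A \<Longrightarrow> 0 \<le> F y x"
  unfolding fam_def by auto

lemma fam_vanishes: "F \<in> fam C B A \<Longrightarrow> y \<in> Pow C \<Longrightarrow> x \<in> A \<Longrightarrow> x \<notin> y \<Longrightarrow> F y x = 0"
  unfolding fam_def by auto

lemma fam_ballot_sum:
  "F \<in> fam C B A \<Longrightarrow> y \<in> Pow C \<Longrightarrow> y \<inter> A \<noteq> {} \<Longrightarrow> (\<Sum>x\<in>A \<inter> y. F y x) = real (B y)"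
  unfolding fam_def by auto

lemma fam_optD:
  assumes "F \<in> fam_opt C B A"
  shows "F \<in> fam C B A" and "\<And>x. x \<in> A \<Longrightarrow> maxMin C B A \<le> Supp C F x"
  using assms unfolding fam_opt_def by auto

lemma covered_votes_eq_sum:
  "finite C \<Longrightarrow> covered_votes C B Z = (\<Sum>y\<in>Pow C. if y \<inter> Z \<noteq> {} then real (B y) else 0)"
  unfolding covered_votes_def by (subst sum.inter_filter) auto

lemma sum_Supp_le_covered_votes:
  assumes F: "F \<in> fam C B A" and "finite C" "finite A" "Y \<subseteq> A"
  shows "(\<Sum>x\<in>Y. Supp C F x) \<le> covered_votes C B Y"
proof -
  have "finite Y" using assms finite_subset by blast
  have "(\<Sum>x\<in>Y. Supp C F x) = (\<Sum>y\<in>Pow C. \<Sum>x\<in>Y. F y x)"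
    unfolding Supp_def by (rule sum.swap)
  also have "\<dots> \<le> (\<Sum>y\<in>Pow C. if y \<inter> Y \<noteq> {} then real (B y) else 0)"
  proof (rule sum_mono)
    fix y assume y: "y \<in> Pow C"
    show "(\<Sum>x\<in>Y. F y x) \<le> (if y \<inter> Y \<noteq> {} then real (B y) else 0)"
    proof (cases "y \<inter> Y = {}")
      case True
      then have "\<forall>x\<in>Y. F y x = 0" using fam_vanishes[OF F y] \<open>Y \<subseteq> A\<close> by blast
      then show ?thesis using True by simp
    next
      case False
      have "(\<Sum>x\<in>Y. F y x) = (\<Sum>x\<in>Y \<inter> y. F y x)"
        using fam_vanishes[OF F y] \<open>Y \<subseteq> A\<close> \<open>finite Y\<close> by (intro sum.mono_neutral_right) auto
      also have "\<dots> \<le> (\<Sum>x\<in>A \<inter> y. F y x)"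
        using fam_nonneg[OF F y] assms by (intro sum_mono2) auto
      also have "\<dots> = real (B y)" using fam_ballot_sum[OF F y] False \<open>Y \<subseteq> A\<close> by blast
      finally show ?thesis using False by simp
    qed
  qed
  also have "\<dots> = covered_votes C B Y" using covered_votes_eq_sum[OF \<open>finite C\<close>] by simp
  finally show ?thesis .
qed

lemma Supp_le_if_tight:
  assumes F: "F \<in> fam C B A" and "finite C" "finite A" "Z \<subseteq> A" "c \<in> Z"
    and above: "\<forall>x\<in>Z. t \<le> Supp C F x" and "tight C B t Z"
  shows "Supp C F c \<le> t"
proof -
  have "finite Z" using \<open>finite A\<close> \<open>Z \<subseteq> A\<close> finite_subset by blast
  have "1 \<le> card Z" using \<open>finite Z\<close> \<open>c \<in> Z\<close> by (metis Suc_leI card_gt_0_iff empty_iff One_nat_def)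
  have "Supp C F c + (real (card Z) - 1) * t
      = Supp C F c + real (card (Z - {c})) * t"
    using \<open>finite Z\<close> \<open>c \<in> Z\<close> \<open>1 \<le> card Z\<close> by (simp add: of_nat_diff)
  also have "\<dots> \<le> Supp C F c + (\<Sum>x\<in>Z - {c}. Supp C F x)"
    using above sum_bounded_below[of "Z - {c}" t "Supp C F"] by simp
  also have "\<dots> = (\<Sum>x\<in>Z. Supp C F x)"
    using \<open>finite Z\<close> \<open>c \<in> Z\<close> by (simp add: sum.remove)
  also have "\<dots> \<le> t * real (card Z)"
    using sum_Supp_le_covered_votes[OF F assms(2-4)] \<open>tight C B t Z\<close> unfolding tight_def by simp
  finally show ?thesis by (simp add: algebra_simps)
qed

lemma le_level_if_tight:
  assumes F: "F \<in> fam C B A" and "finite C" "finite A" "Y \<subseteq> A" "Y \<noteq> {}"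
    and above: "\<forall>x\<in>Y. t \<le> Supp C F x" and "tight C B m Y"
  shows "t \<le> m"
proof -
  have "real (card Y) * t \<le> (\<Sum>x\<in>Y. Supp C F x)"
    using above by (intro sum_bounded_below) auto
  also have "\<dots> \<le> m * real (card Y)"
    using sum_Supp_le_covered_votes[OF F assms(2-4)] \<open>tight C B m Y\<close> unfolding tight_def by simp
  finally show ?thesis
    using assms(3-5) by (simp add: mult.commute card_gt_0_iff finite_subset)
qed

lemma tight_mono: "tight C B m Z \<Longrightarrow> m \<le> m' \<Longrightarrow> tight C B m' Z"
  unfolding tight_def by (meson mult_right_mono of_nat_0_le_iff order_trans)

lemma Supp_le_total_votes:
  assumes G: "G \<in> fam C B A" and "finite A" "x \<in> A"
  shows "Supp C G x \<le> (\<Sum>y\<in>Pow C. real (B y))"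
  unfolding Supp_def
proof (rule sum_mono)
  fix y assume y: "y \<in> Pow C"
  show "G y x \<le> real (B y)"
  proof (cases "x \<in> y")
    case True
    have "G y x \<le> (\<Sum>z\<in>A \<inter> y. G y z)"
      using True assms fam_nonneg[OF G y] by (intro member_le_sum) auto
    also have "\<dots> = real (B y)" using fam_ballot_sum[OF G y] True \<open>x \<in> A\<close> by blast
    finally show ?thesis .
  qed (use fam_vanishes[OF G y \<open>x \<in> A\<close>] in simp)
qed

lemma exists_Supp_le_maxMin:
  assumes G: "G \<in> fam C B A" and "finite A" "A \<noteq> {}"
  shows "\<exists>x\<in>A. Supp C G x \<le> maxMin C B A"
proof -
  have "bdd_above ((\<lambda>G. Min (Supp C G ` A)) ` fam C B A)"
  proof (rule bdd_aboveI2)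
    fix G assume G: "G \<in> fam C B A"
    obtain x where "x \<in> A" using \<open>A \<noteq> {}\<close> by blast
    then have "Min (Supp C G ` A) \<le> Supp C G x" using \<open>finite A\<close> by simp
    also have "\<dots> \<le> (\<Sum>y\<in>Pow C. real (B y))" using Supp_le_total_votes[OF G \<open>finite A\<close> \<open>x \<in> A\<close>] .
    finally show "Min (Supp C G ` A) \<le> (\<Sum>y\<in>Pow C. real (B y))" .
  qed
  then have "Min (Supp C G ` A) \<le> maxMin C B A"
    unfolding maxMin_def using G by (rule cSUP_upper2) simp
  moreover have "Min (Supp C G ` A) \<in> Supp C G ` A" using assms(2,3) by simp
  ultimately show ?thesis by auto
qed

lemma covered_votes_le_sum_Supp_if_closed:
  assumes F: "F \<in> fam C B A" and "finite C" "finite A" "Z \<subseteq> A"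
    and closed: "\<And>y x. y \<in> Pow C \<Longrightarrow> x \<in> A \<Longrightarrow> 0 < F y x \<Longrightarrow> y \<inter> Z \<noteq> {} \<Longrightarrow> x \<in> Z"
  shows "covered_votes C B Z \<le> (\<Sum>x\<in>Z. Supp C F x)"
proof -
  have "finite Z" using assms finite_subset by blast
  have "covered_votes C B Z = (\<Sum>y\<in>Pow C. if y \<inter> Z \<noteq> {} then real (B y) else 0)"
    using covered_votes_eq_sum[OF \<open>finite C\<close>] .
  also have "\<dots> \<le> (\<Sum>y\<in>Pow C. \<Sum>x\<in>Z. F y x)"
  proof (rule sum_mono)
    fix y assume y: "y \<in> Pow C"
    have Z_nonneg: "\<forall>x\<in>Z. 0 \<le> F y x" using fam_nonneg[OF F y] \<open>Z \<subseteq> A\<close> by blast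
    show "(if y \<inter> Z \<noteq> {} then real (B y) else 0) \<le> (\<Sum>x\<in>Z. F y x)"
    proof (cases "y \<inter> Z = {}")
      case False
      have "y \<inter> A \<noteq> {}" using False \<open>Z \<subseteq> A\<close> by blast
      then have "real (B y) = (\<Sum>x\<in>A \<inter> y. F y x)" using fam_ballot_sum[OF F y] by simp
      also have "\<dots> = (\<Sum>x\<in>Z \<inter> y. F y x)"
      proof (rule sum.mono_neutral_right)
        show "\<forall>x\<in>A \<inter> y - Z \<inter> y. F y x = 0"
          using closed[OF y _ _ False] fam_nonneg[OF F y] by force
      qed (use \<open>finite A\<close> \<open>Z \<subseteq> A\<close> in auto)
      also have "\<dots> \<le> (\<Sum>x\<in>Z. F y x)"
        using \<open>finite Z\<close> Z_nonneg by (intro sum_mono2) auto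
      finally show ?thesis using False by simp
    qed (simp add: Z_nonneg sum_nonneg)
  qed
  also have "\<dots> = (\<Sum>x\<in>Z. Supp C F x)" unfolding Supp_def by (rule sum.swap)
  finally show ?thesis .
qed

lemma support_shift_zero: "support_shift C A F (\<lambda>_ _. 0)"
  unfolding support_shift_def by simp

lemma support_shift_sum:
  assumes "finite L" and shifts: "\<And>l. l \<in> L \<Longrightarrow> support_shift C A F (Ds l)"
  shows "support_shift C A F (\<lambda>y x. \<Sum>l\<in>L. Ds l y x)"
  unfolding support_shift_def
proof (intro conjI ballI impI)
  fix y assume "y \<in> Pow C"
  then show "(\<Sum>x\<in>A \<inter> y. \<Sum>l\<in>L. Ds l y x) = 0"
    using shifts unfolding support_shift_def by (subst sum.swap) simp
next
  fix y x assume "y \<in> Pow C" "x \<in> A" "x \<notin> y"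
  then show "(\<Sum>l\<in>L. Ds l y x) = 0" using shifts unfolding support_shift_def by simp
next
  fix y x assume "y \<in> Pow C" "x \<in> A" and neg: "(\<Sum>l\<in>L. Ds l y x) < 0"
  then obtain l where "l \<in> L" "Ds l y x < 0" using sum_nonneg[of L "\<lambda>l. Ds l y x"] by force
  then show "0 < F y x" using shifts \<open>y \<in> Pow C\<close> \<open>x \<in> A\<close> unfolding support_shift_def by blast
qed

text \<open>Moving one unit of the ballot witnessing the edge (d, x) from d to x, prepended to a
  shift along the rest of the path.\<close>
lemma support_shift_along_path:
  assumes F: "F \<in> fam C B A" and "finite C" and "(d, l) \<in> (support_edges C A F)\<^sup>*"
  shows "\<exists>D. support_shift C A F D \<and>
    (\<forall>x\<in>A. Supp C D x = (if x = l then 1 else 0) - (if x = d then 1 else 0))"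
  using assms(3)
proof (induction rule: converse_rtrancl_induct)
  case base
  show ?case by (intro exI[of _ "\<lambda>_ _. 0"]) (simp add: support_shift_zero Supp_def)
next
  case (step d x)
  obtain D where D: "support_shift C A F D"
    and flow: "\<forall>z\<in>A. Supp C D z = (if z = l then 1 else 0) - (if z = x then 1 else 0)"
    using step.IH by blast
  obtain y0 where y0: "y0 \<in> Pow C" "0 < F y0 d" "x \<in> y0" and "d \<in> A" "x \<in> A"
    using step.hyps(1) unfolding support_edges_def by blast
  have "d \<in> y0" using fam_vanishes[OF F y0(1) \<open>d \<in> A\<close>] y0(2) by force
  define E :: "_ \<Rightarrow> _ \<Rightarrow> real"
    where "E y z = (if y = y0 then (if z = x then 1 else 0) - (if z = d then 1 else 0) else 0)" for y z
  define D' where "D' y z = D y z + E y z" for y z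
  have "support_shift C A F D'"
    unfolding support_shift_def
  proof (intro conjI ballI impI)
    fix y assume y: "y \<in> Pow C"
    have "finite (A \<inter> y)" using y \<open>finite C\<close> by (meson PowD finite_Int finite_subset)
    then have "(\<Sum>z\<in>A \<inter> y. E y z) = 0"
      using \<open>d \<in> A\<close> \<open>x \<in> A\<close> \<open>d \<in> y0\<close> y0(3) by (cases "y = y0") (simp_all add: E_def sum_subtractf)
    then show "(\<Sum>z\<in>A \<inter> y. D' y z) = 0"
      using D y unfolding support_shift_def D'_def by (simp add: sum.distrib)
  next
    fix y z assume "y \<in> Pow C" "z \<in> A" "z \<notin> y"
    then show "D' y z = 0" using D y0(3) \<open>d \<in> y0\<close> unfolding support_shift_def D'_def E_def by auto
  next
    fix y z assume y: "y \<in> Pow C" and "z \<in> A" and neg: "D' y z < 0"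
    show "0 < F y z"
    proof (cases "y = y0 \<and> z = d")
      case False
      then have "D y z < 0" using neg unfolding D'_def E_def by (auto split: if_splits)
      then show ?thesis using D y \<open>z \<in> A\<close> unfolding support_shift_def by blast
    qed (use y0 in simp)
  qed
  moreover have "Supp C D' z = (if z = l then 1 else 0) - (if z = d then 1 else 0)" if "z \<in> A" for z
  proof -
    have "Supp C D' z = Supp C D z + (\<Sum>y\<in>Pow C. E y z)"
      unfolding Supp_def D'_def by (simp add: sum.distrib)
    also have "(\<Sum>y\<in>Pow C. E y z) = (if z = x then 1 else 0) - (if z = d then 1 else 0)"
      using y0(1) \<open>finite C\<close> unfolding E_def by (simp add: if_distrib[symmetric])
    finally show ?thesis using flow that by simp
  qed
  ultimately show ?case by blast
qed

lemma Supp_add_scaled: "Supp C (\<lambda>y x. F y x + e * D y x) x = Supp C F x + e * Supp C D x"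
  unfolding Supp_def by (simp add: sum.distrib sum_distrib_left)

lemma eventually_fam_add_shift:
  assumes F: "F \<in> fam C B A" and "finite C" "finite A" and D: "support_shift C A F D"
  shows "\<forall>\<^sub>F e in at_right 0. (\<lambda>y x. F y x + e * D y x) \<in> fam C B A"
proof -
  have "\<forall>\<^sub>F e in at_right 0. 0 \<le> F y x + e * D y x" if "y \<in> Pow C" "x \<in> A" for y x
  proof (cases "D y x < 0")
    case True
    then have "0 < F y x" using D that unfolding support_shift_def by blast
    moreover have "((\<lambda>e. F y x + e * D y x) \<longlongrightarrow> F y x) (at_right 0)"
      by (auto intro!: tendsto_eq_intros)
    ultimately have "\<forall>\<^sub>F e in at_right 0. 0 < F y x + e * D y x" using order_tendstoD(1) by blast
    then show ?thesis by (rule eventually_mono) simp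
  next
    case False
    then show ?thesis using eventually_at_right_less[of 0] fam_nonneg[OF F that]
      by (auto elim!: eventually_mono)
  qed
  then have "\<forall>\<^sub>F e in at_right 0. \<forall>y\<in>Pow C. \<forall>x\<in>A. 0 \<le> F y x + e * D y x"
    using \<open>finite C\<close> \<open>finite A\<close> by (intro eventually_ball_finite ballI) auto
  then show ?thesis
  proof (rule eventually_mono)
    fix e assume nonneg: "\<forall>y\<in>Pow C. \<forall>x\<in>A. 0 \<le> F y x + e * D y x"
    have "(\<Sum>x\<in>A \<inter> y. F y x + e * D y x) = real (B y)" if "y \<in> Pow C" "y \<inter> A \<noteq> {}" for y
      using fam_ballot_sum[OF F that] D that(1)
      by (simp add: sum.distrib sum_distrib_left[symmetric] support_shift_def)
    then show "(\<lambda>y x. F y x + e * D y x) \<in> fam C B A"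
      using nonneg fam_vanishes[OF F] D unfolding fam_def support_shift_def by auto
  qed
qed

lemma tight_if_unreachable:
  assumes F: "F \<in> fam C B A" and "finite C" "finite A"
    and above: "\<forall>x\<in>A. m \<le> Supp C F x" and "l \<in> A" "Supp C F l = m"
    and unreachable: "\<forall>d\<in>A. m < Supp C F d \<longrightarrow> (d, l) \<notin> (support_edges C A F)\<^sup>*"
  shows "tight C B m {d\<in>A. (d, l) \<in> (support_edges C A F)\<^sup>*}"
proof -
  define Z where "Z = {d\<in>A. (d, l) \<in> (support_edges C A F)\<^sup>*}"
  have "Z \<subseteq> A" unfolding Z_def by blast
  have closed: "x \<in> Z" if "y \<in> Pow C" "x \<in> A" "0 < F y x" "y \<inter> Z \<noteq> {}" for y x
  proof -
    obtain z where "z \<in> y" "z \<in> Z" using \<open>y \<inter> Z \<noteq> {}\<close> by blast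
    then have "(x, z) \<in> support_edges C A F"
      using that \<open>Z \<subseteq> A\<close> unfolding support_edges_def by blast
    with \<open>z \<in> Z\<close> show ?thesis using \<open>x \<in> A\<close> unfolding Z_def by auto
  qed
  have at_level: "Supp C F x = m" if "x \<in> Z" for x
    using that above unreachable unfolding Z_def by force
  have "covered_votes C B Z \<le> (\<Sum>x\<in>Z. Supp C F x)"
    using covered_votes_le_sum_Supp_if_closed[OF F \<open>finite C\<close> \<open>finite A\<close> \<open>Z \<subseteq> A\<close> closed] .
  also have "\<dots> = m * card Z" using at_level by (simp add: mult.commute)
  finally show ?thesis unfolding tight_def Z_def .
qed

text \<open>Summing, over all candidates l at the level m, a shift along a path into l from a
  candidate above the level raises every candidate at the level by one unit; a small
  multiple of it keeps the others above the level.\<close>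
lemma exists_fam_above_if_reachable:
  assumes F: "F \<in> fam C B A" and "finite C" "finite A"
    and above: "\<forall>x\<in>A. m \<le> Supp C F x"
    and reachable: "\<forall>l\<in>A. Supp C F l = m \<longrightarrow>
      (\<exists>d\<in>A. m < Supp C F d \<and> (d, l) \<in> (support_edges C A F)\<^sup>*)"
  shows "\<exists>G\<in>fam C B A. \<forall>x\<in>A. m < Supp C G x"
proof -
  define L where "L = {l\<in>A. Supp C F l = m}"
  have "finite L" using \<open>finite A\<close> unfolding L_def by simp
  have src_ex: "\<forall>l\<in>L. \<exists>d. d \<in> A \<and> m < Supp C F d \<and> (d, l) \<in> (support_edges C A F)\<^sup>*"
    using reachable unfolding L_def by blast
  obtain src where src: "\<forall>l\<in>L. src l \<in> A \<and> m < Supp C F (src l) \<and>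
      (src l, l) \<in> (support_edges C A F)\<^sup>*"
    using bchoice[OF src_ex] by blast
  have Ds_ex: "\<forall>l\<in>L. \<exists>D. support_shift C A F D \<and>
      (\<forall>x\<in>A. Supp C D x = (if x = l then 1 else 0) - (if x = src l then 1 else 0))"
    using support_shift_along_path[OF F \<open>finite C\<close>] src by blast
  obtain Ds where Ds: "\<forall>l\<in>L. support_shift C A F (Ds l) \<and>
      (\<forall>x\<in>A. Supp C (Ds l) x = (if x = l then 1 else 0) - (if x = src l then 1 else 0))"
    using bchoice[OF Ds_ex] by blast
  define D where "D y x = (\<Sum>l\<in>L. Ds l y x)" for y x
  have D: "support_shift C A F D"
    unfolding D_def using support_shift_sum[OF \<open>finite L\<close>] Ds by blast
  have flow: "Supp C D x = 1" if x: "x \<in> L" for x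
  proof -
    have "Supp C (Ds l) x = (if x = l then 1 else 0)" if l: "l \<in> L" for l
    proof -
      have "x \<noteq> src l" using src l x unfolding L_def by force
      then show ?thesis using Ds l x unfolding L_def by auto
    qed
    moreover have "Supp C D x = (\<Sum>l\<in>L. Supp C (Ds l) x)"
      unfolding Supp_def D_def by (rule sum.swap)
    ultimately show ?thesis using \<open>finite L\<close> x by simp
  qed
  have "\<forall>\<^sub>F e in at_right 0. m < Supp C F x + e * Supp C D x" if "x \<in> A" for x
  proof (cases "x \<in> L")
    case True
    then show ?thesis using flow eventually_at_right_less[of 0] unfolding L_def
      by (auto elim!: eventually_mono)
  next
    case False
    then have "m < Supp C F x" using above that unfolding L_def by force
    moreover have "((\<lambda>e. Supp C F x + e * Supp C D x) \<longlongrightarrow> Supp C F x) (at_right 0)"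
      by (auto intro!: tendsto_eq_intros)
    ultimately show ?thesis using order_tendstoD(1) by blast
  qed
  then have "\<forall>\<^sub>F e in at_right 0. \<forall>x\<in>A. m < Supp C F x + e * Supp C D x"
    using \<open>finite A\<close> by (intro eventually_ball_finite ballI)
  with eventually_fam_add_shift[OF F \<open>finite C\<close> \<open>finite A\<close> D]
  have "\<forall>\<^sub>F e in at_right 0. (\<lambda>y x. F y x + e * D y x) \<in> fam C B A \<and>
      (\<forall>x\<in>A. m < Supp C F x + e * Supp C D x)"
    by (rule eventually_conj)
  then obtain e where "(\<lambda>y x. F y x + e * D y x) \<in> fam C B A"
      and "\<forall>x\<in>A. m < Supp C F x + e * Supp C D x"
    using eventually_happens'[OF trivial_limit_at_right_real] by blast
  then show ?thesis by (intro bexI[of _ "\<lambda>y x. F y x + e * D y x"]) (simp_all add: Supp_add_scaled)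
qed

lemma exists_tight_subset:
  assumes F: "F \<in> fam_opt C B A" and "finite C" "finite A" "A \<noteq> {}"
  shows "\<exists>Z. Z \<noteq> {} \<and> Z \<subseteq> A \<and> tight C B (maxMin C B A) Z"
proof -
  let ?m = "maxMin C B A" and ?R = "support_edges C A F"
  have above: "\<forall>x\<in>A. ?m \<le> Supp C F x" using fam_optD(2)[OF F] by blast
  show ?thesis
  proof (cases "\<forall>l\<in>A. Supp C F l = ?m \<longrightarrow> (\<exists>d\<in>A. ?m < Supp C F d \<and> (d, l) \<in> ?R\<^sup>*)")
    case True
    obtain G where G: "G \<in> fam C B A" and G_above: "\<forall>x\<in>A. ?m < Supp C G x"
      using exists_fam_above_if_reachable[OF fam_optD(1)[OF F] \<open>finite C\<close> \<open>finite A\<close> above True]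
      by blast
    obtain x where "x \<in> A" "Supp C G x \<le> ?m"
      using exists_Supp_le_maxMin[OF G \<open>finite A\<close> \<open>A \<noteq> {}\<close>] by blast
    moreover have "?m < Supp C G x" using G_above \<open>x \<in> A\<close> by blast
    ultimately show ?thesis by linarith
  next
    case False
    then obtain l where l: "l \<in> A" "Supp C F l = ?m"
      and unreachable: "\<forall>d\<in>A. ?m < Supp C F d \<longrightarrow> (d, l) \<notin> ?R\<^sup>*"
      by blast
    have "tight C B ?m {d\<in>A. (d, l) \<in> ?R\<^sup>*}"
      using tight_if_unreachable[OF fam_optD(1)[OF F] \<open>finite C\<close> \<open>finite A\<close> above l unreachable] .
    moreover have "l \<in> {d\<in>A. (d, l) \<in> ?R\<^sup>*}" using \<open>l \<in> A\<close> by simp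
    ultimately show ?thesis by (intro exI[of _ "{d\<in>A. (d, l) \<in> ?R\<^sup>*}"]) auto
  qed
qed

lemma Supp_eq_maxMin_if_tight:
  assumes F: "F \<in> fam_opt C B A" and "finite C" "finite A" "Z \<subseteq> A" "c \<in> Z"
    and "tight C B (maxMin C B A) Z"
  shows "Supp C F c = maxMin C B A"
proof (rule order_antisym)
  show "maxMin C B A \<le> Supp C F c" using fam_optD(2)[OF F] assms(4,5) by blast
  show "Supp C F c \<le> maxMin C B A"
    using Supp_le_if_tight[OF fam_optD(1)[OF F] assms(2-5) _ assms(6)] fam_optD(2)[OF F] assms(4)
    by blast
qed

lemma exists_last_member_of_prefix:
  "Y \<noteq> {} \<Longrightarrow> Y \<subseteq> set (take i ws) \<Longrightarrow>
    \<exists>j<i. j < length ws \<and> ws ! j \<in> Y \<and> Y \<subseteq> set (take j ws) \<union> {ws ! j}"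
proof (induction i)
  case (Suc k)
  show ?case
  proof (cases "k < length ws \<and> ws ! k \<in> Y")
    case True
    then have "set (take (Suc k) ws) = set (take k ws) \<union> {ws ! k}"
      by (simp add: take_Suc_conv_app_nth)
    then show ?thesis using True Suc.prems by blast
  next
    case False
    then have "Y \<subseteq> set (take k ws)"
      using Suc.prems(2) by (cases "k < length ws") (auto simp: take_Suc_conv_app_nth)
    then show ?thesis using Suc.IH Suc.prems(1) less_SucI by blast
  qed
qed simp

lemma nth_notin_set_take: "distinct ws \<Longrightarrow> j < length ws \<Longrightarrow> ws ! j \<notin> set (take j ws)"
  using distinct_take[of ws "Suc j"] by (simp add: take_Suc_conv_app_nth)

lemma odh_runD:
  "odh_run C S B ws \<Longrightarrow> i < S \<Longrightarrow> \<exists>Fs.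
     (\<forall>x\<in>C - set (take i ws). Fs x \<in> fam_opt C B (set (take i ws) \<union> {x})) \<and>
     (\<forall>x\<in>C - set (take i ws). Supp C (Fs x) x \<le> Supp C (Fs (ws ! i)) (ws ! i))"
  unfolding odh_run_def by blast

lemma maxMin_le_level_if_winner_pinned:
  assumes "finite C" "finite E"
    and Fw: "Fw \<in> fam_opt C B (E \<union> {w})" and Fc: "Fc \<in> fam_opt C B (E \<union> {c})"
    and s_c_le_s_w: "Supp C Fc c \<le> Supp C Fw w"
    and "w \<in> Zw" "Zw \<subseteq> E \<union> {w}" "tight C B (maxMin C B (E \<union> {w})) Zw"
    and "Y \<noteq> {}" "Y \<subseteq> E \<union> {w}" "tight C B m Y"
  shows "maxMin C B (E \<union> {c}) \<le> m"
proof -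
  have fin: "finite (E \<union> {x})" for x using \<open>finite E\<close> by simp
  have s_w: "Supp C Fw w = maxMin C B (E \<union> {w})"
    using Supp_eq_maxMin_if_tight[OF Fw \<open>finite C\<close> fin] assms(6-8) by blast
  have "\<forall>x\<in>Y. maxMin C B (E \<union> {w}) \<le> Supp C Fw x"
    using fam_optD(2)[OF Fw] \<open>Y \<subseteq> E \<union> {w}\<close> by blast
  then have "maxMin C B (E \<union> {w}) \<le> m"
    using le_level_if_tight[OF fam_optD(1)[OF Fw] \<open>finite C\<close> fin] assms(9-11) by blast
  moreover have "maxMin C B (E \<union> {c}) \<le> Supp C Fc c"
    using fam_optD(2)[OF Fc] by simp
  ultimately show ?thesis using s_c_le_s_w s_w by linarith
qed

lemma odh_exists_tight_witness:
  assumes election: "election V C S B" and run: "odh_run C S B ws"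
  shows "i < S \<Longrightarrow> c \<in> C - set (take i ws) \<Longrightarrow>
    \<exists>Z. c \<in> Z \<and> Z \<subseteq> set (take i ws) \<union> {c} \<and> tight C B (maxMin C B (set (take i ws) \<union> {c})) Z"
proof (induction i arbitrary: c rule: less_induct)
  case (less i)
  let ?E = "\<lambda>k. set (take k ws)"
  have "finite C" using election unfolding election_def by simp
  have "distinct ws" "set ws \<subseteq> C" using run unfolding odh_run_def by auto
  have fin: "finite (?E k \<union> {x})" and nonempty: "?E k \<union> {x} \<noteq> {}" for k x by simp_all
  obtain Fs where "\<forall>x\<in>C - ?E i. Fs x \<in> fam_opt C B (?E i \<union> {x})"
    using odh_runD[OF run \<open>i < S\<close>] by blast
  then have Fc: "Fs c \<in> fam_opt C B (?E i \<union> {c})" using less.prems(2) by blast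
  obtain Y where "Y \<noteq> {}" "Y \<subseteq> ?E i \<union> {c}" and Y: "tight C B (maxMin C B (?E i \<union> {c})) Y"
    using exists_tight_subset[OF Fc \<open>finite C\<close> fin nonempty] by blast
  show ?case
  proof (cases "c \<in> Y")
    case True
    with \<open>Y \<subseteq> ?E i \<union> {c}\<close> Y show ?thesis by blast
  next
    case False
    with \<open>Y \<subseteq> ?E i \<union> {c}\<close> have "Y \<subseteq> ?E i" by blast
    then obtain j where "j < i" "j < length ws" and "ws ! j \<in> Y"
      and Y_sub: "Y \<subseteq> ?E j \<union> {ws ! j}"
      using exists_last_member_of_prefix[OF \<open>Y \<noteq> {}\<close>] by blast
    define w where "w = ws ! j"
    have "j < S" using \<open>j < i\<close> \<open>i < S\<close> by simp
    have "?E j \<subseteq> ?E i" using \<open>j < i\<close> by (simp add: set_take_subset_set_take)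
    have w: "w \<in> C - ?E j"
      using nth_notin_set_take[OF \<open>distinct ws\<close> \<open>j < length ws\<close>] nth_mem[OF \<open>j < length ws\<close>]
        \<open>set ws \<subseteq> C\<close> unfolding w_def by blast
    have c: "c \<in> C - ?E j" using less.prems(2) \<open>?E j \<subseteq> ?E i\<close> by blast
    obtain Gs where Gs: "\<forall>x\<in>C - ?E j. Gs x \<in> fam_opt C B (?E j \<union> {x})"
      and s_le_s_w: "\<forall>x\<in>C - ?E j. Supp C (Gs x) x \<le> Supp C (Gs w) w"
      using odh_runD[OF run \<open>j < S\<close>] unfolding w_def by blast
    have Gw: "Gs w \<in> fam_opt C B (?E j \<union> {w})" and Gc: "Gs c \<in> fam_opt C B (?E j \<union> {c})"
      using Gs w c by blast+
    obtain Zw where Zw: "w \<in> Zw" "Zw \<subseteq> ?E j \<union> {w}" "tight C B (maxMin C B (?E j \<union> {w})) Zw"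
      using less.IH[OF \<open>j < i\<close> \<open>j < S\<close> w] by blast
    have level_c: "maxMin C B (?E j \<union> {c}) \<le> maxMin C B (?E i \<union> {c})"
      using maxMin_le_level_if_winner_pinned[OF \<open>finite C\<close> finite_set Gw Gc
          bspec[OF s_le_s_w c] Zw \<open>Y \<noteq> {}\<close> Y_sub[folded w_def] Y] .
    obtain Zc where Zc: "c \<in> Zc" "Zc \<subseteq> ?E j \<union> {c}" "tight C B (maxMin C B (?E j \<union> {c})) Zc"
      using less.IH[OF \<open>j < i\<close> \<open>j < S\<close> c] by blast
    show ?thesis
    proof (intro exI[of _ Zc] conjI)
      show "Zc \<subseteq> ?E i \<union> {c}" using Zc(2) \<open>?E j \<subseteq> ?E i\<close> by blast
      show "tight C B (maxMin C B (?E i \<union> {c})) Zc" using tight_mono[OF Zc(3) level_c] .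
    qed (rule Zc(1))
  qed
qed

theorem theorem2:
  fixes V :: "'v set" and C :: "'c set" and S :: nat and B :: "'c set \<Rightarrow> nat"
    and ws :: "'c list"
  assumes "election V C S B"
    and "odh_run C S B ws"
    and "i < S"
    and "c \<in> C - set (take i ws)"
    and "F \<in> fam_opt C B (set (take i ws) \<union> {c})"
  shows "Supp C F c = maxMin C B (set (take i ws) \<union> {c})"
proof -
  have "finite C" using assms(1) unfolding election_def by simp
  obtain Z where "c \<in> Z" "Z \<subseteq> set (take i ws) \<union> {c}"
      "tight C B (maxMin C B (set (take i ws) \<union> {c})) Z"
    using odh_exists_tight_witness[OF assms(1-4)] by blast
  then show ?thesis
    using Supp_eq_maxMin_if_tight[OF assms(5) \<open>finite C\<close>] by simp
qed

end
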